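(* For every finite connected chordal graph $G$, the set $D(G)=\{v: e(v)=\operatorname{diam}(G)\}$ of diametral vertices is a radius certificate of $G$: for every vertex $u$ there is $t\in D(G)$ with $d(u,t)\ge\operatorname{rad}(G)$.
   Context: A graph is chordal if every induced cycle of length at least 4 has a chord. $d$ shortest-path distance, $e(v)=\max_u d(v,u)$, $\operatorname{rad}(G)=\min_v e(v)$, $\operatorname{diam}(G)=\max_v e(v)$. *)

theory Defs
  imports Main
begin

definition simple_graph :: "'a set \<Rightarrow> ('a \<Rightarrow> 'a \<Rightarrow> bool) \<Rightarrow> bool" where
  "simple_graph V E \<longleftrightarrow> finite V \<and>
     (\<forall>x y. E x y \<longrightarrow> x \<in> V \<and> y \<in> V) \<and>
     (\<forall>x y. E x y \<longrightarrow> E y x) \<and> (\<forall>x. \<not> E x x)"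

text \<open>A walk is a nonempty list of vertices with consecutive entries adjacent;
  its length is the number of edges, i.e. length minus one.\<close>

definition walk :: "'a set \<Rightarrow> ('a \<Rightarrow> 'a \<Rightarrow> bool) \<Rightarrow> 'a list \<Rightarrow> bool" where
  "walk V E p \<longleftrightarrow> p \<noteq> [] \<and> set p \<subseteq> V \<and>
     (\<forall>i. Suc i < length p \<longrightarrow> E (p ! i) (p ! Suc i))"

definition connected_graph :: "'a set \<Rightarrow> ('a \<Rightarrow> 'a \<Rightarrow> bool) \<Rightarrow> bool" where
  "connected_graph V E \<longleftrightarrow> V \<noteq> {} \<and>
     (\<forall>u\<in>V. \<forall>v\<in>V. \<exists>p. walk V E p \<and> hd p = u \<and> last p = v)"

text \<open>Shortest-path distance (meaningful for connected graphs).\<close>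

definition dist :: "'a set \<Rightarrow> ('a \<Rightarrow> 'a \<Rightarrow> bool) \<Rightarrow> 'a \<Rightarrow> 'a \<Rightarrow> nat" where
  "dist V E u v = (LEAST n. \<exists>p. walk V E p \<and> hd p = u \<and> last p = v \<and> length p = Suc n)"

definition ecc :: "'a set \<Rightarrow> ('a \<Rightarrow> 'a \<Rightarrow> bool) \<Rightarrow> 'a \<Rightarrow> nat" where
  "ecc V E v = Max ((\<lambda>u. dist V E v u) ` V)"

definition radius :: "'a set \<Rightarrow> ('a \<Rightarrow> 'a \<Rightarrow> bool) \<Rightarrow> nat" where
  "radius V E = Min (ecc V E ` V)"

definition diameter :: "'a set \<Rightarrow> ('a \<Rightarrow> 'a \<Rightarrow> bool) \<Rightarrow> nat" where
  "diameter V E = Max (ecc V E ` V)"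

definition diametral :: "'a set \<Rightarrow> ('a \<Rightarrow> 'a \<Rightarrow> bool) \<Rightarrow> 'a set" where
  "diametral V E = {v \<in> V. ecc V E v = diameter V E}"

definition induced_cycle :: "'a set \<Rightarrow> ('a \<Rightarrow> 'a \<Rightarrow> bool) \<Rightarrow> 'a list \<Rightarrow> bool" where
  "induced_cycle V E c \<longleftrightarrow> length c \<ge> 3 \<and> distinct c \<and> set c \<subseteq> V \<and>
     (\<forall>i<length c. \<forall>j<length c.
        E (c ! i) (c ! j) \<longleftrightarrow> (j = Suc i mod length c \<or> i = Suc j mod length c))"

definition chordal :: "'a set \<Rightarrow> ('a \<Rightarrow> 'a \<Rightarrow> bool) \<Rightarrow> bool" where
  "chordal V E \<longleftrightarrow> (\<forall>c. induced_cycle V E c \<longrightarrow> length c < 4)"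

end

(*
  Chordality enters through one fact: if two neighbours of a vertex a are joined by a walk
  avoiding a, they are joined by such a walk inside the neighbourhood of a, since otherwise a
  shortest counterexample closed up by a would be an induced cycle of length at least 4.
  Measuring levels by the distance from a vertex u, it follows that two vertices on the same
  level j that reach a common vertex through vertices above level j are equal or adjacent.
  This yields a four-point inequality for u, a vertex x above level h, and two vertices t1, t2
  close to x, and, through a descent on eccentricities, the Laskar-Shier bound
  2 rad \<le> diam + 2.

  Now suppose every diametral vertex is closer than rad to u. For a diametral pair t1, t2,
  diam \<le> d(u,t1) + d(u,t2) \<le> 2 rad - 2, so with the Laskar-Shier bound everything is tight.
  A vertex x farthest from u is not diametral, hence d(x,t_i) < diam, and the four-point
  inequality for u, x, t1, t2 gives diam + 2 \<le> 2 rad - 1, a contradiction.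
*)

theory Submission
  imports Defs
begin

lemma walk_Nil [simp]: "\<not> walk S E []"
  by (simp add: walk_def)

lemma walk_single [simp]: "walk S E [x] \<longleftrightarrow> x \<in> S"
  by (simp add: walk_def)

lemma walk_Cons_Cons: "walk S E (x # y # p) \<longleftrightarrow> x \<in> S \<and> E x y \<and> walk S E (y # p)"
  unfolding walk_def by (auto simp: nth_Cons split: nat.splits)

lemma walk_Cons: "walk S E (x # p) \<longleftrightarrow> x \<in> S \<and> (p = [] \<or> E x (hd p) \<and> walk S E p)"
  by (cases p) (auto simp: walk_Cons_Cons)

lemma walk_setD: "walk S E p \<Longrightarrow> v \<in> set p \<Longrightarrow> v \<in> S"
  by (auto simp: walk_def)

lemma walk_nth_in: "walk S E p \<Longrightarrow> i < length p \<Longrightarrow> p ! i \<in> S"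
  by (auto simp: walk_def)

lemma walk_edge: "walk S E p \<Longrightarrow> Suc i < length p \<Longrightarrow> E (p ! i) (p ! Suc i)"
  by (auto simp: walk_def)

lemma walk_subset: "walk S E p \<Longrightarrow> set p \<subseteq> T \<Longrightarrow> walk T E p"
  by (simp add: walk_def)

lemma walk_take: "walk S E p \<Longrightarrow> 0 < k \<Longrightarrow> walk S E (take k p)"
  unfolding walk_def by (auto dest: in_set_takeD)

lemma walk_drop: "walk S E p \<Longrightarrow> k < length p \<Longrightarrow> walk S E (drop k p)"
  unfolding walk_def by (auto dest: in_set_dropD)

lemma walk_append:
  assumes "walk S E xs" "walk S E ys" "E (last xs) (hd ys)"
  shows "walk S E (xs @ ys)"
  using assms
proof (induction xs)
  case (Cons x xs)
  then show ?case
    by (cases "xs = []") (auto simp: walk_Cons)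
qed simp

lemma last_append_tl: "xs \<noteq> [] \<Longrightarrow> ys \<noteq> [] \<Longrightarrow> last xs = hd ys \<Longrightarrow> last (xs @ tl ys) = last ys"
  by (cases ys) auto

lemma walk_append_tl:
  assumes "walk S E xs" "walk S E ys" "last xs = hd ys"
  shows "walk S E (xs @ tl ys)"
proof (cases "tl ys")
  case (Cons z zs)
  then obtain y where "ys = y # z # zs"
    by (cases ys) auto
  then show ?thesis
    using assms walk_append[of S E xs "z # zs"] by (simp add: walk_Cons_Cons)
qed (use assms in simp)

lemma walk_rev:
  assumes sym: "\<And>x y. E x y \<Longrightarrow> E y x" and p: "walk S E p"
  shows "walk S E (rev p)"
  using p
proof (induction p rule: induct_list012)
  case (3 x y zs)
  have "walk S E (rev zs @ [y]) \<and> E y x"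
    using 3 sym by (auto simp: walk_Cons_Cons)
  then show ?case
    using walk_append[of S E "rev zs @ [y]" "[x]"] 3(3) by (simp add: walk_Cons_Cons)
qed auto

lemma walk_exit:
  assumes "walk S E p" "hd p \<in> X" "last p \<notin> X"
  shows "\<exists>i. Suc i < length p \<and> p ! i \<in> X \<and> p ! Suc i \<notin> X"
  using assms
proof (induction p rule: induct_list012)
  case (3 x y zs)
  then show ?case
    by (cases "y \<in> X") (fastforce simp: walk_Cons_Cons)+
qed auto

definition walk_connected :: "'a set \<Rightarrow> ('a \<Rightarrow> 'a \<Rightarrow> bool) \<Rightarrow> 'a \<Rightarrow> 'a \<Rightarrow> bool" where
  "walk_connected S E x y \<longleftrightarrow> (\<exists>p. walk S E p \<and> hd p = x \<and> last p = y)"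

lemma walk_connectedI: "walk S E p \<Longrightarrow> walk_connected S E (hd p) (last p)"
  unfolding walk_connected_def by blast

lemma walk_connectedD: "walk_connected S E x y \<Longrightarrow> x \<in> S \<and> y \<in> S"
  unfolding walk_connected_def by (metis walk_setD hd_in_set last_in_set walk_Nil)

lemma walk_connected_of_walk: "walk S E p \<Longrightarrow> set p \<subseteq> T \<Longrightarrow> walk_connected T E (hd p) (last p)"
  using walk_connectedI walk_subset by metis

lemma walk_connected_mono:
  assumes "walk_connected S E x y" "S \<subseteq> T"
  shows "walk_connected T E x y"
proof -
  obtain p where p: "walk S E p" "hd p = x" "last p = y"
    using assms(1) unfolding walk_connected_def by blast
  then have "walk T E p"
    using assms(2) by (auto simp: walk_def)
  then show ?thesis
    using p walk_connectedI by blast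
qed

lemma walk_connected_refl: "x \<in> S \<Longrightarrow> walk_connected S E x x"
  using walk_connectedI[of S E "[x]"] by simp

lemma walk_connected_edge: "x \<in> S \<Longrightarrow> y \<in> S \<Longrightarrow> E x y \<Longrightarrow> walk_connected S E x y"
  using walk_connectedI[of S E "[x, y]"] by (simp add: walk_Cons_Cons)

lemma walk_connected_eq_or_edge:
  "x \<in> S \<Longrightarrow> y \<in> S \<Longrightarrow> x = y \<or> E x y \<Longrightarrow> walk_connected S E x y"
  using walk_connected_refl walk_connected_edge by metis

lemma walk_connected_trans:
  assumes "walk_connected S E x y" "walk_connected S E y z"
  shows "walk_connected S E x z"
proof -
  obtain p q where p: "walk S E p" "hd p = x" "last p = y" and q: "walk S E q" "hd q = y" "last q = z"
    using assms unfolding walk_connected_def by blast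
  have "hd (p @ tl q) = x" "last (p @ tl q) = z"
    using p q by (cases p; cases q; auto)+
  then show ?thesis
    using walk_connectedI[OF walk_append_tl[OF p(1) q(1)]] p q by simp
qed

lemma walk_connected_sym:
  assumes "\<And>x y. E x y \<Longrightarrow> E y x" "walk_connected S E x y"
  shows "walk_connected S E y x"
  using assms walk_connectedI[OF walk_rev] unfolding walk_connected_def
  by (metis hd_rev last_rev)

definition chordless :: "('a \<Rightarrow> 'a \<Rightarrow> bool) \<Rightarrow> 'a list \<Rightarrow> bool" where
  "chordless E p \<longleftrightarrow> (\<forall>i j. Suc i < j \<and> j < length p \<longrightarrow> \<not> E (p ! i) (p ! j))"

definition shortest_walk_between ::
    "'a set \<Rightarrow> ('a \<Rightarrow> 'a \<Rightarrow> bool) \<Rightarrow> 'a set \<Rightarrow> 'a set \<Rightarrow> 'a list \<Rightarrow> bool" where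
  "shortest_walk_between S E X Y q \<longleftrightarrow> walk S E q \<and> hd q \<in> X \<and> last q \<in> Y \<and>
     (\<forall>q'. walk S E q' \<and> hd q' \<in> X \<and> last q' \<in> Y \<longrightarrow> length q \<le> length q')"

lemma shortest_walk_between_exists:
  assumes "walk S E p" "hd p \<in> X" "last p \<in> Y"
  obtains q where "shortest_walk_between S E X Y q"
  using ex_has_least_nat[of "\<lambda>q. walk S E q \<and> hd q \<in> X \<and> last q \<in> Y" p length] assms that
  unfolding shortest_walk_between_def by blast

lemma shortest_walk_between_chordless:
  assumes q: "shortest_walk_between S E X Y q"
  shows "chordless E q"
  unfolding chordless_def
proof (intro allI impI notI)
  fix i j assume ij: "Suc i < j \<and> j < length q" and e: "E (q ! i) (q ! j)"
  have w: "walk S E q"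
    using q by (simp add: shortest_walk_between_def)
  let ?q' = "take (Suc i) q @ drop j q"
  have "last (take (Suc i) q) = q ! i" "hd (drop j q) = q ! j"
    using ij by (simp_all add: take_Suc_conv_app_nth hd_drop_conv_nth)
  then have "walk S E ?q'"
    using walk_append[OF walk_take[OF w, of "Suc i"] walk_drop[OF w, of j]] ij e by auto
  moreover have "hd ?q' = hd q" "last ?q' = last q"
    using ij by (cases q; simp)+
  ultimately have "length q \<le> length ?q'"
    using q by (auto simp: shortest_walk_between_def)
  then show False
    using ij by simp arith
qed

lemma shortest_walk_between_distinct:
  assumes q: "shortest_walk_between S E X Y q"
  shows "distinct q"
proof (rule ccontr)
  assume "\<not> distinct q"
  then obtain i j where ij: "i < j" "j < length q" "q ! i = q ! j"
    by (metis distinct_conv_nth linorder_neqE_nat)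
  have w: "walk S E q"
    using q by (simp add: shortest_walk_between_def)
  let ?q' = "take (Suc i) q @ tl (drop j q)"
  have join: "last (take (Suc i) q) = hd (drop j q)"
    using ij by (simp add: take_Suc_conv_app_nth hd_drop_conv_nth)
  have ne: "take (Suc i) q \<noteq> []" "drop j q \<noteq> []"
    using ij by auto
  have "walk S E ?q'"
    using walk_append_tl[OF walk_take[OF w] walk_drop[OF w] join] ij by simp
  moreover have "hd ?q' = hd q"
    using ne(1) by simp
  moreover have "last ?q' = last q"
    using last_append_tl[OF ne join] ij by simp
  ultimately have "length q \<le> length ?q'"
    using q by (auto simp: shortest_walk_between_def)
  then show False
    using ij by simp
qed

lemma shortest_walk_between_interior:
  assumes q: "shortest_walk_between S E X Y q" and i: "0 < i" "Suc i < length q"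
  shows "q ! i \<notin> X" "q ! i \<notin> Y"
proof -
  have w: "walk S E q" and ends: "hd q \<in> X" "last q \<in> Y"
    and min: "\<And>q'. walk S E q' \<Longrightarrow> hd q' \<in> X \<Longrightarrow> last q' \<in> Y \<Longrightarrow> length q \<le> length q'"
    using q by (auto simp: shortest_walk_between_def)
  show "q ! i \<notin> X"
  proof
    assume "q ! i \<in> X"
    moreover have "hd (drop i q) = q ! i" "last (drop i q) = last q"
      using i by (simp_all add: hd_drop_conv_nth)
    ultimately have "length q \<le> length (drop i q)"
      using min[OF walk_drop[OF w, of i]] ends i by simp
    then show False
      using i by simp
  qed
  show "q ! i \<notin> Y"
  proof
    assume "q ! i \<in> Y"
    moreover have "hd (take (Suc i) q) = hd q" "last (take (Suc i) q) = q ! i"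
      using i by (simp, simp add: take_Suc_conv_app_nth)
    ultimately have "length q \<le> length (take (Suc i) q)"
      using min[OF walk_take[OF w, of "Suc i"]] ends by simp
    then show False
      using i by simp
  qed
qed

lemma shortest_walk_between_length:
  assumes q: "shortest_walk_between S E X Y q"
    and disjoint: "X \<inter> Y = {}" and nonadj: "\<And>x y. x \<in> X \<Longrightarrow> y \<in> Y \<Longrightarrow> \<not> E x y"
  shows "3 \<le> length q"
proof -
  have "walk S E q" "hd q \<in> X" "last q \<in> Y"
    using q by (simp_all add: shortest_walk_between_def)
  then show ?thesis
    using disjoint nonadj
    by (cases q; cases "tl q"; cases "tl (tl q)") (auto simp: walk_Cons_Cons)
qed

locale connected_simple_graph =
  fixes V :: "'a set" and E :: "'a \<Rightarrow> 'a \<Rightarrow> bool"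
  assumes simple: "simple_graph V E" and connected: "connected_graph V E"
begin

abbreviation d :: "'a \<Rightarrow> 'a \<Rightarrow> nat" where "d \<equiv> dist V E"

lemma finite_V: "finite V"
  using simple by (simp add: simple_graph_def)

lemma V_nonempty: "V \<noteq> {}"
  using connected by (simp add: connected_graph_def)

lemma adj_in_V: "E x y \<Longrightarrow> x \<in> V \<and> y \<in> V"
  using simple by (simp add: simple_graph_def)

lemma adj_sym: "E x y \<Longrightarrow> E y x"
  using simple by (simp add: simple_graph_def)

lemma adj_irrefl: "\<not> E x x"
  using simple by (simp add: simple_graph_def)

lemma chordless_walk_adj_iff:
  assumes p: "walk V E p" "chordless E p" and ij: "i < length p" "j < length p"
  shows "E (p ! i) (p ! j) \<longleftrightarrow> j = Suc i \<or> i = Suc j"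
proof
  assume e: "E (p ! i) (p ! j)"
  have "\<not> Suc i < j" "\<not> Suc j < i"
    using p(2) ij e adj_sym unfolding chordless_def by blast+
  moreover have "i \<noteq> j"
    using e adj_irrefl by auto
  ultimately show "j = Suc i \<or> i = Suc j"
    by linarith
next
  assume "j = Suc i \<or> i = Suc j"
  then show "E (p ! i) (p ! j)"
    using walk_edge[OF p(1)] ij adj_sym by auto
qed

definition geodesic :: "'a list \<Rightarrow> 'a \<Rightarrow> 'a \<Rightarrow> bool" where
  "geodesic p x y \<longleftrightarrow> walk V E p \<and> hd p = x \<and> last p = y \<and> length p = Suc (d x y)"

lemma dist_le_length:
  assumes "walk V E p" "hd p = x" "last p = y"
  shows "d x y \<le> length p - 1"
proof -
  have "length p = Suc (length p - 1)"
    using assms(1) by (cases p) auto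
  then show ?thesis
    unfolding dist_def using assms by (intro Least_le) blast
qed

lemma geodesic_exists:
  assumes "x \<in> V" "y \<in> V"
  obtains p where "geodesic p x y"
proof -
  obtain p where p: "walk V E p" "hd p = x" "last p = y"
    using connected assms by (auto simp: connected_graph_def)
  have "length p = Suc (length p - 1)"
    using p(1) by (cases p) auto
  then have "\<exists>n p. walk V E p \<and> hd p = x \<and> last p = y \<and> length p = Suc n"
    using p by blast
  then have "\<exists>q. walk V E q \<and> hd q = x \<and> last q = y \<and> length q = Suc (d x y)"
    unfolding dist_def by (rule LeastI_ex)
  then show ?thesis
    using that unfolding geodesic_def by blast
qed

lemma geodesic_walk: "geodesic p x y \<Longrightarrow> walk V E p"
  and geodesic_hd: "geodesic p x y \<Longrightarrow> hd p = x"
  and geodesic_last: "geodesic p x y \<Longrightarrow> last p = y"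
  and geodesic_length: "geodesic p x y \<Longrightarrow> length p = Suc (d x y)"
  by (simp_all add: geodesic_def)

lemma geodesic_Nil: "\<not> geodesic [] x y"
  by (simp add: geodesic_def)

lemma geodesic_in_V:
  assumes "geodesic p x y"
  shows "x \<in> V" "y \<in> V" "set p \<subseteq> V"
proof -
  have "p \<noteq> []" "set p \<subseteq> V"
    using assms walk_setD by (auto simp: geodesic_def)
  then show "x \<in> V" "y \<in> V" "set p \<subseteq> V"
    using assms hd_in_set last_in_set by (auto simp: geodesic_def)
qed

lemma dist_self: "x \<in> V \<Longrightarrow> d x x = 0"
  using dist_le_length[of "[x]" x x] by simp

lemma dist_sym:
  assumes "x \<in> V" "y \<in> V"
  shows "d x y = d y x"
proof -
  have "d a b \<le> d b a" if ab: "a \<in> V" "b \<in> V" for a b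
  proof -
    obtain p where p: "geodesic p b a"
      using geodesic_exists[OF ab(2,1)] by blast
    have "walk V E (rev p)"
      using walk_rev[OF adj_sym geodesic_walk[OF p]] .
    then have "d a b \<le> length (rev p) - 1"
      using p dist_le_length[of "rev p" a b] by (simp add: geodesic_def hd_rev last_rev)
    then show ?thesis
      using p by (simp add: geodesic_def)
  qed
  then show ?thesis
    using assms le_antisym by blast
qed

lemma dist_triangle:
  assumes "x \<in> V" "y \<in> V" "z \<in> V"
  shows "d x z \<le> d x y + d y z"
proof -
  obtain p q where p: "geodesic p x y" and q: "geodesic q y z"
    using geodesic_exists assms by metis
  then have "hd (p @ tl q) = x" "last (p @ tl q) = z"
    by (cases p; cases q; auto simp: geodesic_def)+
  then have "d x z \<le> length (p @ tl q) - 1"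
    using p q by (intro dist_le_length walk_append_tl) (auto simp: geodesic_def)
  then show ?thesis
    using p q by (simp add: geodesic_def)
qed

lemma dist_adj: "E x y \<Longrightarrow> d x y \<le> 1"
  using dist_le_length[of "[x, y]" x y] adj_in_V by (auto simp: walk_Cons_Cons)

lemma dist_eq_0: "x \<in> V \<Longrightarrow> y \<in> V \<Longrightarrow> d x y = 0 \<Longrightarrow> x = y"
  by (metis geodesic_exists geodesic_def length_0_conv length_Suc_conv list.sel(1) last_ConsL)

lemma dist_eq_1:
  assumes "x \<in> V" "y \<in> V" "d x y = 1"
  shows "E x y"
proof -
  obtain p where p: "geodesic p x y"
    using geodesic_exists assms by metis
  then obtain a b where "p = [a, b]"
    using assms by (cases p; cases "tl p") (auto simp: geodesic_def)
  then show ?thesis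
    using p by (auto simp: geodesic_def walk_Cons_Cons)
qed

lemma dist_adj_le:
  assumes "u \<in> V" "E a b"
  shows "d u a \<le> d u b + 1"
proof -
  have "a \<in> V" "b \<in> V"
    using adj_in_V[OF assms(2)] by auto
  then have "d u a \<le> d u b + d b a"
    using dist_triangle[of u b a] assms(1) by simp
  then show ?thesis
    using dist_adj[OF adj_sym[OF assms(2)]] by linarith
qed

lemma geodesic_nth:
  assumes p: "geodesic p x y" and i: "i < length p"
  shows "d x (p ! i) = i" "d (p ! i) y = d x y - i"
proof -
  have w: "walk V E p" and hd: "hd p = x" and last: "last p = y" and len: "length p = Suc (d x y)"
    using p by (simp_all add: geodesic_def)
  have "p \<noteq> []"
    using len by auto
  then have V: "x \<in> V" "y \<in> V" "p ! i \<in> V"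
    using walk_setD[OF w] nth_mem[OF i] hd last by auto
  have "hd (take (Suc i) p) = x"
    using hd \<open>p \<noteq> []\<close> by (cases p) auto
  moreover have "last (take (Suc i) p) = p ! i"
    using i by (simp add: take_Suc_conv_app_nth)
  ultimately have a: "d x (p ! i) \<le> i"
    using dist_le_length[OF walk_take[OF w, of "Suc i"]] i by simp
  have "hd (drop i p) = p ! i" "last (drop i p) = y"
    using i last by (simp_all add: hd_drop_conv_nth)
  then have "d (p ! i) y \<le> length p - 1 - i"
    using dist_le_length[OF walk_drop[OF w i]] by simp
  moreover have "d x y \<le> d x (p ! i) + d (p ! i) y"
    using dist_triangle V by blast
  ultimately show "d x (p ! i) = i" "d (p ! i) y = d x y - i"
    using a len i by linarith+
qed

lemma geodesic_point:
  assumes "u \<in> V" "v \<in> V" "j \<le> d u v"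
  obtains a where "a \<in> V" "d u a = j" "d a v = d u v - j"
proof -
  obtain p where p: "geodesic p u v"
    using geodesic_exists assms by metis
  then have "j < length p"
    using assms by (simp add: geodesic_def)
  then show ?thesis
    using that[of "p ! j"] geodesic_nth[OF p] walk_nth_in[OF geodesic_walk[OF p]] p
    by (simp add: geodesic_def)
qed

lemma geodesic_set_dist:
  assumes p: "geodesic p u v" and w: "w \<in> set p"
  shows "w = v \<or> d u w < d u v"
proof -
  obtain i where i: "i < length p" "w = p ! i"
    using w by (auto simp: in_set_conv_nth)
  have "p \<noteq> []"
    using i by auto
  then have "p ! d u v = v"
    using p by (metis geodesic_def last_conv_nth diff_Suc_1)
  then show ?thesis
    using geodesic_nth(1)[OF p i(1)] i p by (cases "i = d u v") (auto simp: geodesic_def)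
qed

text \<open>Distances from u change by at most one along an edge.\<close>

lemma walk_meets_level:
  assumes u: "u \<in> V" and r: "walk V E r" and "j \<le> d u (hd r)" "d u (last r) \<le> j"
  shows "\<exists>v\<in>set r. d u v = j"
proof (rule ccontr)
  assume none: "\<not> ?thesis"
  have "r \<noteq> []"
    using r by auto
  then have "d u (hd r) \<noteq> j" "d u (last r) \<noteq> j"
    using none by auto
  then have "hd r \<in> {v. j < d u v}" "last r \<notin> {v. j < d u v}"
    using assms by auto
  then obtain i where i: "Suc i < length r" "j < d u (r ! i)" "d u (r ! Suc i) \<le> j"
    using walk_exit[OF r, of "{v. j < d u v}"] by auto
  have "d u (r ! i) \<le> d u (r ! Suc i) + 1"
    using dist_adj_le[OF u walk_edge[OF r i(1)]] .
  moreover have "d u (r ! Suc i) \<noteq> j"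
    using none i(1) nth_mem by blast
  ultimately show False
    using i by linarith
qed

lemma walk_connected_inside_ball:
  assumes "u \<in> V" "v \<in> V"
  shows "walk_connected ({w \<in> V. d u w < d u v} \<union> {v}) E u v"
proof -
  obtain p where p: "geodesic p u v"
    using geodesic_exists assms by blast
  have "set p \<subseteq> {w \<in> V. d u w < d u v} \<union> {v}"
    using geodesic_set_dist[OF p] geodesic_in_V(3)[OF p] by auto
  then show ?thesis
    using walk_connected_of_walk[OF geodesic_walk[OF p]] geodesic_hd[OF p] geodesic_last[OF p]
    by simp
qed

lemma dist_le_ecc: "x \<in> V \<Longrightarrow> y \<in> V \<Longrightarrow> d x y \<le> ecc V E x"
  unfolding ecc_def using finite_V by (intro Max_ge) auto

lemma ecc_attained:
  assumes "x \<in> V"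
  obtains y where "y \<in> V" "d x y = ecc V E x"
proof -
  have "ecc V E x \<in> d x ` V"
    unfolding ecc_def using finite_V V_nonempty by (intro Max_in) auto
  then show ?thesis
    using that by auto
qed

lemma ecc_le: "x \<in> V \<Longrightarrow> (\<And>y. y \<in> V \<Longrightarrow> d x y \<le> k) \<Longrightarrow> ecc V E x \<le> k"
  unfolding ecc_def using finite_V V_nonempty by (subst Max_le_iff) auto

lemma radius_le_ecc: "x \<in> V \<Longrightarrow> radius V E \<le> ecc V E x"
  unfolding radius_def using finite_V by (intro Min_le) auto

lemma radius_attained:
  obtains c where "c \<in> V" "ecc V E c = radius V E"
proof -
  have "radius V E \<in> ecc V E ` V"
    unfolding radius_def using finite_V V_nonempty by (intro Min_in) auto
  then show ?thesis
    using that by auto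
qed

lemma ecc_le_diameter: "x \<in> V \<Longrightarrow> ecc V E x \<le> diameter V E"
  unfolding diameter_def using finite_V by (intro Max_ge) auto

lemma diameter_attained:
  obtains c where "c \<in> V" "ecc V E c = diameter V E"
proof -
  have "diameter V E \<in> ecc V E ` V"
    unfolding diameter_def using finite_V V_nonempty by (intro Max_in) auto
  then show ?thesis
    using that by auto
qed

lemma dist_le_diameter: "x \<in> V \<Longrightarrow> y \<in> V \<Longrightarrow> d x y \<le> diameter V E"
  using dist_le_ecc ecc_le_diameter le_trans by blast

lemma diametral_pair:
  obtains t1 t2 where "t1 \<in> diametral V E" "t2 \<in> diametral V E" "d t1 t2 = diameter V E"
proof -
  obtain t1 where t1: "t1 \<in> V" "ecc V E t1 = diameter V E"
    by (rule diameter_attained)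
  obtain t2 where t2: "t2 \<in> V" "d t1 t2 = ecc V E t1"
    using ecc_attained[OF t1(1)] by blast
  have "d t2 t1 \<le> ecc V E t2" "ecc V E t2 \<le> diameter V E"
    using dist_le_ecc[OF t2(1) t1(1)] ecc_le_diameter[OF t2(1)] .
  then have "ecc V E t2 = diameter V E"
    using dist_sym[OF t1(1) t2(1)] t1(2) t2(2) by linarith
  then show ?thesis
    using that t1 t2 by (simp add: diametral_def)
qed

lemma geodesic_dist_lower:
  assumes u: "u \<in> V" and Z: "geodesic Z z z'" and i: "i < length Z"
  shows "d u z + d u z' \<le> 2 * d u (Z ! i) + d z z'"
proof -
  have V: "z \<in> V" "z' \<in> V" "Z ! i \<in> V"
    using geodesic_in_V[OF Z] nth_mem[OF i] by auto
  have "d u z \<le> d u (Z ! i) + d (Z ! i) z" "d u z' \<le> d u (Z ! i) + d (Z ! i) z'"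
    using dist_triangle u V by blast+
  moreover have "d (Z ! i) z = i"
    using geodesic_nth(1)[OF Z i] dist_sym V by simp
  moreover have "d (Z ! i) z' = d z z' - i" "i \<le> d z z'"
    using geodesic_nth(2)[OF Z i] i geodesic_length[OF Z] by simp_all
  ultimately show ?thesis
    by linarith
qed

definition geodesic_slice :: "'a \<Rightarrow> 'a \<Rightarrow> nat \<Rightarrow> 'a set" where
  "geodesic_slice u z j = {a \<in> V. d u a = j \<and> d a z = d u z - j}"

lemma geodesic_slice_step:
  assumes u: "u \<in> V" and z: "z \<in> V" and x: "x \<in> geodesic_slice u z j" and j: "j < d u z"
  obtains p where "p \<in> geodesic_slice u z (Suc j)" "E x p"
proof -
  have xV: "x \<in> V" and x': "d u x = j" "d x z = d u z - j"
    using x by (auto simp: geodesic_slice_def)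
  have "1 \<le> d x z"
    using x' j by simp
  then obtain p where p: "p \<in> V" "d x p = 1" "d p z = d x z - 1"
    using geodesic_point[OF xV z] by blast
  have "d u p \<le> d u x + d x p" "d u z \<le> d u p + d p z"
    using dist_triangle u xV z p(1) by blast+
  then have "p \<in> geodesic_slice u z (Suc j)"
    using p x' j by (simp add: geodesic_slice_def)
  then show ?thesis
    using that dist_eq_1[OF xV p(1,2)] by blast
qed

lemma geodesic_slice_not_adj:
  assumes w: "w \<in> V" and z: "z \<in> V" and a: "a \<in> geodesic_slice u z j"
    and far: "d u z - j + 1 < d w z"
  shows "\<not> E w a"
proof
  assume "E w a"
  then have "d w z \<le> 1 + d a z"
    using dist_triangle[OF w _ z, of a] dist_adj[of w a] a by (auto simp: geodesic_slice_def)
  then show False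
    using a far by (simp add: geodesic_slice_def)
qed

lemma geodesic_low_points_in_slices:
  assumes u: "u \<in> V" and Z: "geodesic Z z z'" and z: "d u z = k" "d u z' = k"
    and close: "d z z' + 2 * h \<le> 2 * k + 1"
    and i: "i0 \<le> i1" "i1 < length Z" "d u (Z ! i0) = h" "d u (Z ! i1) = h"
  shows "Z ! i0 \<in> geodesic_slice u z' h \<or> Z ! i1 \<in> geodesic_slice u z h \<or>
    Z ! i0 \<in> geodesic_slice u z h \<and> Z ! i1 \<in> geodesic_slice u z' h \<and> E (Z ! i0) (Z ! i1)"
proof -
  have V: "z \<in> V" "z' \<in> V" "Z ! i0 \<in> V" "Z ! i1 \<in> V"
    using geodesic_in_V[OF Z] nth_mem[of i0 Z] nth_mem[OF i(2)] i(1,2) by auto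
  have pos: "d z (Z ! i0) = i0" "d (Z ! i0) z' = d z z' - i0"
    "d z (Z ! i1) = i1" "d (Z ! i1) z' = d z z' - i1"
    using geodesic_nth[OF Z] i by auto
  have "d u z \<le> d u (Z ! i0) + d (Z ! i0) z" "d u z' \<le> d u (Z ! i1) + d (Z ! i1) z'"
    using dist_triangle u V by blast+
  then have lower: "k - h \<le> i0" "k - h \<le> d z z' - i1"
    using pos dist_sym[of z "Z ! i0"] V z i by simp_all
  have "i1 \<le> d z z'"
    using i geodesic_length[OF Z] by simp
  then consider "i0 = i1" "i0 = k - h" | "i0 = i1" "d z z' - i0 = k - h"
    | "i1 = Suc i0" "i0 = k - h" "d z z' - i1 = k - h"
    using lower close i(1) by linarith
  then show ?thesis
  proof cases
    case 3
    then have "E (Z ! i0) (Z ! i1)"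
      using walk_edge[OF geodesic_walk[OF Z]] i(2) by simp
    then show ?thesis
      using 3 pos V i z dist_sym[of z "Z ! i0"] by (simp add: geodesic_slice_def)
  qed (use pos V i z dist_sym[of z "Z ! i0"] in \<open>simp_all add: geodesic_slice_def\<close>)
qed


lemma apex_adj_iff:
  assumes p: "p \<noteq> []" and ends: "E a (hd p)" "E a (last p)"
    and interior: "\<And>i. 0 < i \<Longrightarrow> Suc i < length p \<Longrightarrow> \<not> E a (p ! i)" and j: "j < length p"
  shows "E a (p ! j) \<longleftrightarrow> j = 0 \<or> j = length p - 1"
proof -
  have "p ! 0 = hd p" "p ! (length p - 1) = last p"
    using p by (simp_all add: hd_conv_nth last_conv_nth)
  moreover have "\<not> E a (p ! j)" if "0 < j" "j \<noteq> length p - 1"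
    using interior[of j] that j by linarith
  ultimately show ?thesis
    using ends by auto
qed

lemma apex_cycle_adj_iff:
  assumes p: "walk V E p" "chordless E p" "3 \<le> length p"
    and ends: "E a (hd p)" "E a (last p)"
    and interior: "\<And>i. 0 < i \<Longrightarrow> Suc i < length p \<Longrightarrow> \<not> E a (p ! i)"
    and ij: "i < Suc (length p)" "j < Suc (length p)"
  shows "E ((a # p) ! i) ((a # p) ! j) \<longleftrightarrow>
    (j = Suc i mod Suc (length p) \<or> i = Suc j mod Suc (length p))"
proof -
  define n where "n = length p"
  have apex_adj: "E a (p ! j) \<longleftrightarrow> j = 0 \<or> j = n - 1" if "j < n" for j
    using apex_adj_iff[OF _ ends interior] p(3) that n_def by fastforce
  have mod_i: "Suc i mod Suc n = (if i = n then 0 else Suc i)"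
    and mod_j: "Suc j mod Suc n = (if j = n then 0 else Suc j)"
    using ij n_def by auto
  have n3: "3 \<le> n"
    using n_def p(3) by simp
  have "E ((a # p) ! i) ((a # p) ! j) \<longleftrightarrow> (j = Suc i mod Suc n \<or> i = Suc j mod Suc n)"
  proof (cases i; cases j)
    assume "i = 0" "j = 0"
    then show ?thesis
      using adj_irrefl mod_i n3 n_def by auto
  next
    fix j' assume "i = 0" "j = Suc j'"
    then show ?thesis
      using apex_adj[of j'] mod_i mod_j ij n_def n3 by auto
  next
    fix i' assume "i = Suc i'" "j = 0"
    moreover have "E (p ! i') a \<longleftrightarrow> E a (p ! i')"
      using adj_sym by blast
    ultimately show ?thesis
      using apex_adj[of i'] mod_i mod_j ij n_def n3 by auto
  next
    fix i' j' assume ij': "i = Suc i'" "j = Suc j'"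
    then have "i' < n" "j' < n"
      using ij n_def by simp_all
    then have "E (p ! i') (p ! j') \<longleftrightarrow> j' = Suc i' \<or> i' = Suc j'"
      using chordless_walk_adj_iff[OF p(1,2)] n_def by simp
    then show ?thesis
      using ij' mod_i mod_j \<open>i' < n\<close> \<open>j' < n\<close> by auto
  qed
  then show ?thesis
    by (simp add: n_def)
qed

lemma induced_cycle_Cons_apex:
  assumes a: "a \<in> V" "a \<notin> set p"
    and p: "walk V E p" "distinct p" "chordless E p" "3 \<le> length p"
    and ends: "E a (hd p)" "E a (last p)"
    and interior: "\<And>i. 0 < i \<Longrightarrow> Suc i < length p \<Longrightarrow> \<not> E a (p ! i)"
  shows "induced_cycle V E (a # p)"
  unfolding induced_cycle_def
proof (intro conjI allI impI)
  show "3 \<le> length (a # p)" "distinct (a # p)" "set (a # p) \<subseteq> V"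
    using a p walk_setD[OF p(1)] by auto
  fix i j assume "i < length (a # p)" "j < length (a # p)"
  then show "E ((a # p) ! i) ((a # p) ! j) \<longleftrightarrow>
      (j = Suc i mod length (a # p) \<or> i = Suc j mod length (a # p))"
    using apex_cycle_adj_iff[OF p(1,3,4) ends interior] by simp
qed

end

locale chordal_graph = connected_simple_graph +
  assumes chordal: "chordal V E"
begin

lemma no_chordless_path_with_apex:
  assumes a: "a \<in> V" "a \<notin> set p"
    and p: "walk V E p" "distinct p" "chordless E p" "3 \<le> length p"
    and ends: "E a (hd p)" "E a (last p)"
    and interior: "\<And>i. 0 < i \<Longrightarrow> Suc i < length p \<Longrightarrow> \<not> E a (p ! i)"
  shows False
proof -
  have "induced_cycle V E (a # p)"
    using induced_cycle_Cons_apex assms by blast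
  then show False
    using chordal p(4) unfolding chordal_def by fastforce
qed

text \<open>A shortest walk in U from the component C of x in the neighbourhood to the rest of the
  neighbourhood, together with a, would be a chordless cycle of length at least 4.\<close>

lemma walk_connected_neighbourhood:
  assumes a: "a \<in> V" "a \<notin> U" and U: "U \<subseteq> V" and adj: "E a x" "E a y"
    and xy: "walk_connected U E x y"
  shows "walk_connected (U \<inter> {v. E a v}) E x y"
proof (rule ccontr)
  define N where "N = U \<inter> {v. E a v}"
  define C where "C = {v. walk_connected N E x v}"
  assume "\<not> walk_connected (U \<inter> {v. E a v}) E x y"
  then have "y \<notin> C"
    by (simp add: C_def N_def)
  have "x \<in> U" "y \<in> U"
    using walk_connectedD[OF xy] by auto
  then have "x \<in> C" "y \<in> N"
    using adj by (simp_all add: C_def N_def walk_connected_refl)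
  have C_N: "C \<subseteq> N"
    using walk_connectedD[of N E x] by (auto simp: C_def)
  have C_closed: "w \<in> C" if "v \<in> C" "w \<in> N" "E v w" for v w
  proof -
    have "v \<in> N"
      using that(1) C_N by blast
    then show ?thesis
      using that walk_connected_trans[OF _ walk_connected_edge[of v N w E]] by (simp add: C_def)
  qed
  obtain p where "walk U E p" "hd p \<in> C" "last p \<in> N - C"
    using xy \<open>x \<in> C\<close> \<open>y \<in> N\<close> \<open>y \<notin> C\<close> by (auto simp: walk_connected_def)
  then obtain q where q: "shortest_walk_between U E C (N - C) q"
    by (rule shortest_walk_between_exists)
  then have w: "walk U E q" and hd: "hd q \<in> C" and last: "last q \<in> N - C"
    by (simp_all add: shortest_walk_between_def)
  have len: "3 \<le> length q"
    using shortest_walk_between_length[OF q] C_closed by blast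
  have interior: "\<not> E a (q ! i)" if "0 < i" "Suc i < length q" for i
    using shortest_walk_between_interior[OF q that] walk_nth_in[OF w, of i] that
    by (auto simp: N_def)
  show False
  proof (rule no_chordless_path_with_apex[OF a(1) _ walk_subset[OF w]])
    show "a \<notin> set q" "set q \<subseteq> V"
      using walk_setD[OF w] a(2) U by auto
    show "E a (hd q)" "E a (last q)"
      using hd last C_N by (auto simp: N_def)
  qed (use q len interior in \<open>auto intro: shortest_walk_between_distinct shortest_walk_between_chordless\<close>)
qed

definition reach_above :: "'a \<Rightarrow> nat \<Rightarrow> 'a \<Rightarrow> 'a \<Rightarrow> bool" where
  "reach_above u h a y \<longleftrightarrow>
     (\<exists>q. walk V E q \<and> hd q = a \<and> last q = y \<and> (\<forall>v\<in>set (tl q). h < d u v))"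

lemma reach_above_geodesic:
  assumes u: "u \<in> V" and a: "a \<in> V" "d u a = h" and v: "v \<in> V" "d a v = d u v - h" "h \<le> d u v"
  shows "reach_above u h a v"
proof -
  obtain p where p: "geodesic p a v"
    using geodesic_exists[OF a(1) v(1)] by blast
  have "h < d u w" if w: "w \<in> set (tl p)" for w
  proof -
    obtain i where i: "Suc i < length p" "w = p ! Suc i"
      using w by (cases p) (auto simp: in_set_conv_nth)
    have "d w v = d a v - Suc i"
      using geodesic_nth(2)[OF p i(1)] i(2) by simp
    moreover have "d u v \<le> d u w + d w v"
      using dist_triangle u v(1) walk_nth_in[OF geodesic_walk[OF p] i(1)] i(2) by blast
    ultimately show ?thesis
      using v i geodesic_length[OF p] by linarith
  qed
  then show ?thesis
    using p unfolding reach_above_def geodesic_def by blast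
qed

lemma reach_above_extend:
  assumes "reach_above u h a y" "walk V E q" "hd q = y" "\<forall>v\<in>set q. h < d u v"
  shows "reach_above u h a (last q)"
proof -
  obtain p where p: "walk V E p" "hd p = a" "last p = y" "\<forall>v\<in>set (tl p). h < d u v"
    using assms(1) unfolding reach_above_def by blast
  have "p \<noteq> []" "q \<noteq> []"
    using p(1) assms(2) by auto
  have "set (tl (p @ tl q)) \<subseteq> set (tl p) \<union> set q"
    using \<open>p \<noteq> []\<close> \<open>q \<noteq> []\<close> by (cases p; cases q) auto
  then show ?thesis
    unfolding reach_above_def
    using walk_append_tl[OF p(1) assms(2)] last_append_tl[OF \<open>p \<noteq> []\<close> \<open>q \<noteq> []\<close>]
      hd_append2[OF \<open>p \<noteq> []\<close>] p assms
    by (intro exI[of _ "p @ tl q"]) auto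
qed

lemma reach_above_prefix:
  assumes Z: "walk V E Z" and i: "i < length Z" and above: "\<And>j. j < i \<Longrightarrow> h < d u (Z ! j)"
  shows "reach_above u h (Z ! i) (hd Z)"
proof -
  let ?q = "rev (take (Suc i) Z)"
  have "?q = Z ! i # rev (take i Z)"
    using i by (simp add: take_Suc_conv_app_nth)
  moreover have "walk V E ?q"
    using walk_rev[OF adj_sym walk_take[OF Z]] by simp
  moreover have "last ?q = hd Z"
    using i by (simp add: last_rev)
  moreover have "h < d u v" if "v \<in> set (take i Z)" for v
    using that above i by (auto simp: in_set_conv_nth)
  ultimately show ?thesis
    unfolding reach_above_def by (intro exI[of _ ?q]) auto
qed

lemma reach_above_suffix:
  assumes Z: "walk V E Z" and i: "i < length Z"
    and above: "\<And>j. i < j \<Longrightarrow> j < length Z \<Longrightarrow> h < d u (Z ! j)"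
  shows "reach_above u h (Z ! i) (last Z)"
proof -
  let ?q = "drop i Z"
  have "?q = Z ! i # drop (Suc i) Z"
    using i by (simp add: Cons_nth_drop_Suc)
  moreover have "walk V E ?q"
    using walk_drop[OF Z i] .
  moreover have "last ?q = last Z"
    using i by simp
  moreover have "h < d u v" if "v \<in> set (drop (Suc i) Z)" for v
    using that above by (auto simp: in_set_conv_nth)
  ultimately show ?thesis
    unfolding reach_above_def by (intro exI[of _ ?q]) auto
qed

lemma walk_low_points:
  assumes Z: "walk V E Z" and i: "i < length Z" "d u (Z ! i) \<le> h"
  obtains i0 i1 where "i0 \<le> i1" "i1 < length Z" "d u (Z ! i0) \<le> h" "d u (Z ! i1) \<le> h"
    "reach_above u h (Z ! i0) (hd Z)" "reach_above u h (Z ! i1) (last Z)"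
proof -
  define S where "S = {i. i < length Z \<and> d u (Z ! i) \<le> h}"
  have "i \<in> S" "finite S"
    using i by (auto simp: S_def)
  then have "Min S \<in> S" "Max S \<in> S"
    using Min_in Max_in by blast+
  then have S: "Min S \<in> S" "Max S \<in> S" "Min S \<le> Max S"
    using Min_le[OF \<open>finite S\<close>] by blast+
  have "h < d u (Z ! j)" if "j < Min S" for j
    using that S(1) Min_le[OF \<open>finite S\<close>, of j] by (fastforce simp: S_def)
  moreover have "h < d u (Z ! j)" if "Max S < j" "j < length Z" for j
    using that Max_ge[OF \<open>finite S\<close>, of j] by (fastforce simp: S_def)
  ultimately show ?thesis
    using that[of "Min S" "Max S"] S reach_above_prefix[OF Z] reach_above_suffix[OF Z]
    by (auto simp: S_def)
qed

lemma reach_above_walk_connected: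
  assumes "reach_above u h a y"
  shows "walk_connected ({w \<in> V. h < d u w} \<union> {a}) E a y"
proof -
  obtain q where q: "walk V E q" "hd q = a" "last q = y" "\<forall>v\<in>set (tl q). h < d u v"
    using assms unfolding reach_above_def by blast
  then have "set q \<subseteq> {w \<in> V. h < d u w} \<union> {a}"
    using walk_setD[OF q(1)] by (cases q) auto
  then show ?thesis
    using walk_connected_of_walk[OF q(1)] q(2,3) by simp
qed

lemma reach_above_first_step:
  assumes reach: "reach_above u h a y" and a: "d u a \<le> h" and y: "h < d u y"
  obtains x where "E a x" "h < d u x" "walk_connected {w \<in> V. h < d u w} E x y"
proof -
  obtain q where q: "walk V E q" "hd q = a" "last q = y" "\<forall>v\<in>set (tl q). h < d u v"
    using reach unfolding reach_above_def by blast
  then obtain x rest where x: "q = a # x # rest"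
    using a y by (cases q; cases "tl q") auto
  then have "walk V E (x # rest)" "E a x" "set (x # rest) \<subseteq> {w \<in> V. h < d u w}"
    using q walk_setD[OF q(1)] by (auto simp: walk_Cons_Cons)
  then show ?thesis
    using that walk_connected_of_walk[of V E "x # rest"] q(3,4) x by simp
qed

text \<open>Otherwise the upper neighbour x of a on the walk to y and a lower neighbour y' of a are
  joined outside level j except through b. By chordality they are joined inside the
  neighbourhood of a, and such a walk must cross level j, hence pass through b.\<close>

lemma reach_above_adjacent:
  assumes u: "u \<in> V" and a: "a \<in> V" "d u a = j" and b: "b \<in> V" "d u b = j" and y: "j < d u y"
    and reach: "reach_above u j a y" "reach_above u j b y"
  shows "a = b \<or> E a b"
proof (cases "a = b")
  case False
  have "0 < j"
    using False u a b dist_eq_0 by (metis gr0I)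
  obtain x where x: "E a x" "j < d u x" "walk_connected {w \<in> V. j < d u w} E x y"
    using reach_above_first_step[OF reach(1)] a(2) y by auto
  obtain y' where y': "y' \<in> V" "d u y' = j - 1" "d y' a = 1"
    using geodesic_point[OF u a(1), of "j - 1"] a \<open>0 < j\<close> by auto
  have "E a y'"
    using dist_eq_1[OF y'(1) a(1) y'(3)] adj_sym by blast
  define U where "U = {v \<in> V. d u v \<noteq> j} \<union> {b}"
  have x_y: "walk_connected U E x y"
    by (rule walk_connected_mono[OF x(3)]) (auto simp: U_def)
  have y_b: "walk_connected U E y b"
    using walk_connected_sym[OF adj_sym reach_above_walk_connected[OF reach(2)]]
    by (rule walk_connected_mono) (auto simp: U_def)
  have b_u: "walk_connected U E b u"
    using walk_connected_sym[OF adj_sym walk_connected_inside_ball[OF u b(1)]]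
    by (rule walk_connected_mono) (auto simp: U_def b(2))
  have u_y': "walk_connected U E u y'"
    using walk_connected_inside_ball[OF u y'(1)]
    by (rule walk_connected_mono) (use y' \<open>0 < j\<close> in \<open>auto simp: U_def\<close>)
  have "walk_connected U E x y'"
    using walk_connected_trans[OF x_y walk_connected_trans[OF y_b walk_connected_trans[OF b_u u_y']]] .
  moreover have "a \<notin> U" "U \<subseteq> V"
    using False a b by (auto simp: U_def)
  ultimately obtain r where r: "walk (U \<inter> {v. E a v}) E r" "hd r = x" "last r = y'"
    using walk_connected_neighbourhood[OF a(1) _ _ x(1) \<open>E a y'\<close>]
    unfolding walk_connected_def by blast
  then obtain v where "v \<in> set r" "d u v = j"
    using walk_meets_level[OF u walk_subset[OF r(1)], of j] x(2) y'(2)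
      walk_setD[OF r(1)] \<open>U \<subseteq> V\<close> by auto
  then show ?thesis
    using walk_setD[OF r(1)] by (auto simp: U_def)
qed simp

lemma reach_above_slice:
  assumes u: "u \<in> V" and y: "y \<in> V" "h \<le> d u y" and a: "a \<in> geodesic_slice u y h"
  shows "reach_above u h a y"
  using reach_above_geodesic[OF u _ _ y(1)] a y(2) by (simp add: geodesic_slice_def)

lemma geodesic_slice_adjacent_reach_above:
  assumes u: "u \<in> V" and y: "y \<in> V" "h < d u y" and a: "a \<in> geodesic_slice u y h"
    and s: "s \<in> V" "d u s = h" "reach_above u h s y"
  shows "a = s \<or> E a s"
  using reach_above_adjacent[OF u _ _ s(1,2) y(2) reach_above_slice[OF u y(1) _ a] s(3)] a y(2)
  by (simp add: geodesic_slice_def)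

lemma geodesic_slice_clique:
  assumes u: "u \<in> V" and y: "y \<in> V" "h < d u y"
    and a: "a \<in> geodesic_slice u y h" "b \<in> geodesic_slice u y h"
  shows "a = b \<or> E a b"
  using geodesic_slice_adjacent_reach_above[OF u y a(1)] reach_above_slice[OF u y(1) _ a(2)] a(2) y(2)
  by (simp add: geodesic_slice_def)

lemma geodesic_point_reach_above:
  assumes u: "u \<in> V" and x: "x \<in> V" "h < d u x" and t: "t \<in> V"
    and close: "d x t + 2 * h \<le> d u t + d u x"
  obtains \<alpha> where "\<alpha> \<in> V" "d u \<alpha> = h" "d \<alpha> t + h = d u t" "reach_above u h \<alpha> x"
proof -
  obtain P where P: "geodesic P x t"
    using geodesic_exists[OF x(1) t] by blast
  show ?thesis
  proof (cases "\<exists>i<length P. d u (P ! i) \<le> h")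
    case True
    then obtain i where i: "i < length P" "d u (P ! i) \<le> h"
      by blast
    define s where "s = P ! i"
    have s: "s \<in> V"
      using walk_nth_in[OF geodesic_walk[OF P] i(1)] by (simp add: s_def)
    have "d x s = i" "d s t = d x t - i"
      using geodesic_nth[OF P i(1)] by (simp_all add: s_def)
    moreover have "d u x \<le> d u s + d s x" "d u t \<le> d u s + d s t"
      using dist_triangle u s x(1) t by blast+
    moreover have "d s x = d x s"
      using dist_sym s x(1) by simp
    moreover have "i \<le> d x t"
      using i(1) geodesic_length[OF P] by simp
    ultimately have "d u s = h" "d s t + h = d u t" "d s x = d u x - h"
      using i(2) close unfolding s_def by linarith+
    then show ?thesis
      using that reach_above_geodesic[OF u s _ x(1)] s x(2) by simp
  next
    case False
    then have above: "\<forall>v\<in>set P. h < d u v"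
      by (auto simp: in_set_conv_nth not_le)
    moreover have "t \<in> set P"
      using geodesic_last[OF P] geodesic_Nil P by (metis last_in_set)
    ultimately have "h < d u t"
      by blast
    then obtain \<alpha> where \<alpha>: "\<alpha> \<in> V" "d u \<alpha> = h" "d \<alpha> t = d u t - h"
      using geodesic_point[OF u t, of h] by auto
    have "reach_above u h \<alpha> t"
      using reach_above_geodesic[OF u \<alpha>(1,2) t \<alpha>(3)] \<open>h < d u t\<close> by simp
    then have "reach_above u h \<alpha> (last (rev P))"
      using reach_above_extend[OF _ walk_rev[OF adj_sym geodesic_walk[OF P]]] above P
      by (simp add: hd_rev geodesic_def)
    then show ?thesis
      using that \<alpha> \<open>h < d u t\<close> P by (simp add: last_rev geodesic_def)
  qed
qed

lemma four_point_bound: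
  assumes u: "u \<in> V" and x: "x \<in> V" "h < d u x" and t: "t1 \<in> V" "t2 \<in> V"
    and close: "d x t1 + 2 * h \<le> d u t1 + d u x" "d x t2 + 2 * h \<le> d u t2 + d u x"
  shows "d t1 t2 + 2 * h \<le> d u t1 + d u t2 + 1"
proof -
  obtain a1 where a1: "a1 \<in> V" "d u a1 = h" "d a1 t1 + h = d u t1" "reach_above u h a1 x"
    using geodesic_point_reach_above[OF u x t(1) close(1)] by blast
  obtain a2 where a2: "a2 \<in> V" "d u a2 = h" "d a2 t2 + h = d u t2" "reach_above u h a2 x"
    using geodesic_point_reach_above[OF u x t(2) close(2)] by blast
  have "a1 = a2 \<or> E a1 a2"
    using reach_above_adjacent[OF u a1(1,2) a2(1,2) _ a1(4) a2(4)] x(2) by simp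
  then have "d a1 a2 \<le> 1"
    using dist_self[OF a1(1)] dist_adj by auto
  moreover have "d t1 t2 \<le> d t1 a1 + d a1 a2 + d a2 t2"
    using dist_triangle[OF t(1) a1(1) t(2)] dist_triangle[OF a1(1) a2(1) t(2)] by linarith
  moreover have "d t1 a1 = d a1 t1"
    using dist_sym t(1) a1(1) by simp
  ultimately show ?thesis
    using a1 a2 by linarith
qed

lemma geodesic_slices_linked:
  assumes u: "u \<in> V" and z: "z \<in> V" "d u z = k" and z': "z' \<in> V" "d u z' = k" and h: "h < k"
    and close: "d z z' + 2 * h \<le> 2 * k + 1"
    and p: "p \<in> geodesic_slice u z h" and p': "p' \<in> geodesic_slice u z' h"
  obtains a a' where "a \<in> geodesic_slice u z h" "a' \<in> geodesic_slice u z' h" "a = a' \<or> E a a'"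
proof -
  obtain Z where Z: "geodesic Z z z'"
    using geodesic_exists[OF z(1) z'(1)] by blast
  have level: "h \<le> d u (Z ! i)" if "i < length Z" for i
    using geodesic_dist_lower[OF u Z that] z z' close by linarith
  have near: "a = s \<or> E a s"
    if "a \<in> geodesic_slice u y h" "y \<in> V" "d u y = k" "s \<in> V" "d u s = h" "reach_above u h s y"
    for a s y
    using geodesic_slice_adjacent_reach_above[OF u _ _ that(1)] that h by simp
  show ?thesis
  proof (cases "\<exists>i<length Z. d u (Z ! i) \<le> h")
    case False
    then have "\<forall>v\<in>set Z. h < d u v"
      by (auto simp: in_set_conv_nth not_le)
    then have "reach_above u h p z'"
      using reach_above_extend[OF reach_above_slice[OF u z(1) _ p] geodesic_walk[OF Z]] Z h z
      by (simp add: geodesic_def)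
    then show ?thesis
      using that[OF p p'] near[OF p' z'] p adj_sym by (auto simp: geodesic_slice_def)
  next
    case True
    then obtain i0 i1 where i: "i0 \<le> i1" "i1 < length Z" "d u (Z ! i0) \<le> h" "d u (Z ! i1) \<le> h"
      and reach: "reach_above u h (Z ! i0) z" "reach_above u h (Z ! i1) z'"
      using walk_low_points[OF geodesic_walk[OF Z]] geodesic_hd[OF Z] geodesic_last[OF Z] by metis
    have s: "Z ! i0 \<in> V" "d u (Z ! i0) = h" "Z ! i1 \<in> V" "d u (Z ! i1) = h"
      using i level walk_nth_in[OF geodesic_walk[OF Z]] by (simp_all add: le_antisym)
    consider "Z ! i0 \<in> geodesic_slice u z' h" | "Z ! i1 \<in> geodesic_slice u z h"
      | "Z ! i0 \<in> geodesic_slice u z h" "Z ! i1 \<in> geodesic_slice u z' h" "E (Z ! i0) (Z ! i1)"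
      using geodesic_low_points_in_slices[OF u Z z(2) z'(2) close i(1,2) s(2,4)] by blast
    then show ?thesis
      using that near[OF p z s(1,2) reach(1)] near[OF p' z' s(3,4) reach(2)] p p' adj_sym
      by cases blast+
  qed
qed

lemma linked_slices_walk_connected:
  assumes u: "u \<in> V" and y: "y \<in> V" "h < d u y" and y': "y' \<in> V" "h < d u y'"
    and a: "a \<in> geodesic_slice u y h" "a' \<in> geodesic_slice u y' h" "a = a' \<or> E a a'"
    and p: "p \<in> geodesic_slice u y h" and p': "p' \<in> geodesic_slice u y' h"
  shows "walk_connected (geodesic_slice u y h \<union> geodesic_slice u y' h) E p p'"
proof -
  let ?U = "geodesic_slice u y h \<union> geodesic_slice u y' h"
  have "p = a \<or> E p a" "a' = p' \<or> E a' p'"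
    using geodesic_slice_clique[OF u y p a(1)] geodesic_slice_clique[OF u y' a(2) p'] by simp_all
  then show ?thesis
    using walk_connected_eq_or_edge[of p ?U a E] walk_connected_eq_or_edge[of a ?U a' E]
      walk_connected_eq_or_edge[of a' ?U p' E] p p' a
    by (blast intro: walk_connected_trans)
qed

lemma slices_level_one_adjacent:
  assumes u: "u \<in> V" and z: "z \<in> V" "d u z = k" and z': "z' \<in> V" "d u z' = k"
    and close: "d z z' + 3 \<le> 2 * k"
    and w: "w \<in> geodesic_slice u z' 1" and w': "w' \<in> geodesic_slice u z 1"
  shows "w = w' \<or> E w w'"
proof -
  obtain Z where Z: "geodesic Z z z'"
    using geodesic_exists[OF z(1) z'(1)] by blast
  have "1 < d u v" if "v \<in> set Z" for v
    using that geodesic_dist_lower[OF u Z] z z' close by (fastforce simp: in_set_conv_nth)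
  then have "reach_above u 1 w' z'"
    using reach_above_extend[OF reach_above_slice[OF u z(1) _ w'] geodesic_walk[OF Z]]
      z close Z by (simp add: geodesic_def)
  then show ?thesis
    using reach_above_adjacent[OF u _ _ _ _ _ reach_above_slice[OF u z'(1) _ w]] w w' z' close
    by (simp add: geodesic_slice_def)
qed

text \<open>The vertices w and w' are adjacent, and w' is joined to p' through the slices avoiding w.
  Inside the neighbourhood of w the first step from w' then reaches a slice vertex adjacent to
  w or to w', which the distance hypotheses exclude.\<close>

lemma no_crossed_cover:
  assumes u: "u \<in> V" and w: "w \<in> V" "d u w = 1" and w': "w' \<in> V" "d u w' = 1"
    and z: "z \<in> V" "d u z = k" and z': "z' \<in> V" "d u z' = k" and k: "2 < k"
    and close: "d z z' + 3 \<le> 2 * k"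
    and far: "k \<le> d w z" "k \<le> d w' z'" and near: "d w z' < k" "d w' z < k"
  shows False
proof -
  let ?A = "geodesic_slice u z 2" and ?A' = "geodesic_slice u z' 2"
  have "d u z' \<le> d u w + d w z'" "d u z \<le> d u w' + d w' z"
    using dist_triangle u w(1) w'(1) z(1) z'(1) by blast+
  then have w_slice: "w \<in> geodesic_slice u z' 1" and w'_slice: "w' \<in> geodesic_slice u z 1"
    using w w' z z' near by (simp_all add: geodesic_slice_def)
  obtain p' where p': "p' \<in> ?A'" "E w p'"
    using geodesic_slice_step[OF u z'(1) w_slice] z' k by (auto simp: numeral_2_eq_2)
  obtain p where p: "p \<in> ?A" "E w' p"
    using geodesic_slice_step[OF u z(1) w'_slice] z k by (auto simp: numeral_2_eq_2)
  have not_w_A: "\<not> E w a" if "a \<in> ?A" for a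
    using geodesic_slice_not_adj[OF w(1) z(1) that] far(1) z(2) k by simp
  have not_w'_A': "\<not> E w' a" if "a \<in> ?A'" for a
    using geodesic_slice_not_adj[OF w'(1) z'(1) that] far(2) z'(2) k by simp
  have "w \<noteq> w'"
    using far near by auto
  then have "E w w'"
    using slices_level_one_adjacent[OF u z z' close w_slice w'_slice] by blast
  obtain a a' where a: "a \<in> ?A" "a' \<in> ?A'" "a = a' \<or> E a a'"
    using geodesic_slices_linked[OF u z z' k _ p(1) p'(1)] close by auto
  define U where "U = ?A \<union> ?A' \<union> {w'}"
  have "walk_connected U E p p'"
    using linked_slices_walk_connected[OF u z(1) _ z'(1) _ a p(1) p'(1)] z z' k
    by (auto elim: walk_connected_mono simp: U_def)
  then have "walk_connected U E w' p'"
    using walk_connected_trans[OF walk_connected_edge[of w' U p E]] p by (simp add: U_def)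
  moreover have "w \<notin> U" "U \<subseteq> V"
    using \<open>w \<noteq> w'\<close> w w' by (auto simp: U_def geodesic_slice_def)
  ultimately obtain r where r: "walk (U \<inter> {v. E w v}) E r" "hd r = w'" "last r = p'"
    using walk_connected_neighbourhood[OF w(1) _ _ \<open>E w w'\<close> p'(2)]
    unfolding walk_connected_def by blast
  have "p' \<noteq> w'"
    using p' w' by (auto simp: geodesic_slice_def)
  then obtain v rest where "r = w' # v # rest"
    using r by (cases r; cases "tl r") auto
  then have "E w' v" "v \<in> U" "E w v"
    using r(1) by (auto simp: walk_Cons_Cons walk_Cons)
  then show False
    using adj_irrefl not_w_A not_w'_A' by (auto simp: U_def)
qed

text \<open>Take the neighbour w of u bringing the most farthest vertices closer; a farthest vertex z
  missed by w is brought closer by some other neighbour w', which in turn misses some z'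
  brought closer by w.\<close>

lemma exists_covering_neighbour:
  assumes u: "u \<in> V" and z0: "z0 \<in> V" "d u z0 = k" and k: "2 < k"
    and close: "\<And>z z'. z \<in> V \<Longrightarrow> z' \<in> V \<Longrightarrow> d u z = k \<Longrightarrow> d u z' = k \<Longrightarrow> d z z' + 3 \<le> 2 * k"
  obtains w where "w \<in> V" "d u w = 1" "\<And>z. z \<in> V \<Longrightarrow> d u z = k \<Longrightarrow> d w z < k"
proof -
  define F where "F = {z \<in> V. d u z = k}"
  define cover where "cover w = {z \<in> F. d w z < k}" for w
  have step: "\<exists>w'\<in>V. d u w' = 1 \<and> z \<in> cover w'" if "z \<in> F" for z
  proof -
    have "z \<in> V" "1 \<le> d u z"
      using that k by (simp_all add: F_def)
    then obtain w' where "w' \<in> V" "d u w' = 1" "d w' z = d u z - 1"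
      using geodesic_point[OF u] by metis
    then show ?thesis
      using that k by (auto simp: cover_def F_def)
  qed
  have "finite F"
    using finite_V by (simp add: F_def)
  then have finite_cover: "finite (cover w)" and card_cover: "card (cover w) < card F + 1" for w
    using card_mono[of F "cover w"] by (auto simp: cover_def)
  obtain w0 where "w0 \<in> V" "d u w0 = 1"
    using step[of z0] z0 by (auto simp: F_def)
  then obtain w where w: "w \<in> V" "d u w = 1"
    and max: "\<And>w'. w' \<in> V \<Longrightarrow> d u w' = 1 \<Longrightarrow> card (cover w') \<le> card (cover w)"
    using Lattices_Big.ex_has_greatest_nat[of "\<lambda>w. w \<in> V \<and> d u w = 1" w0 "\<lambda>w. card (cover w)"]
      card_cover by blast
  have covered: "z \<in> cover w" if "z \<in> F" for z
  proof (rule ccontr)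
    assume "z \<notin> cover w"
    obtain w' where w': "w' \<in> V" "d u w' = 1" "z \<in> cover w'"
      using step[OF \<open>z \<in> F\<close>] by blast
    have "\<not> cover w \<subseteq> cover w'"
      using psubset_card_mono[OF finite_cover] max[OF w'(1,2)] w'(3) \<open>z \<notin> cover w\<close>
      by (metis not_le psubsetI)
    then obtain z' where "z' \<in> cover w" "z' \<notin> cover w'"
      by blast
    then have z': "z' \<in> V" "d u z' = k" "d w z' < k" "k \<le> d w' z'"
      by (auto simp: F_def cover_def)
    have z: "z \<in> V" "d u z = k" "k \<le> d w z" "d w' z < k"
      using \<open>z \<in> F\<close> \<open>z \<notin> cover w\<close> w'(3) by (auto simp: F_def cover_def)
    show False
      using no_crossed_cover[OF u w w'(1,2) z(1,2) z'(1,2) k close[OF z(1) z'(1) z(2) z'(2)] z(3) z'(4) z'(3) z(4)] .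
  qed
  have "d w z < k" if "z \<in> V" "d u z = k" for z
    using covered[of z] that by (simp add: F_def cover_def)
  then show ?thesis
    using that w by blast
qed

lemma eccentricity_descent:
  assumes u: "u \<in> V" and D: "diameter V E + 3 \<le> 2 * ecc V E u"
  obtains w where "w \<in> V" "ecc V E w < ecc V E u"
proof -
  define k where "k = ecc V E u"
  have "k \<le> diameter V E"
    using ecc_le_diameter[OF u] by (simp add: k_def)
  then have k: "2 < k"
    using D k_def by linarith
  have dist_D: "d x y + 3 \<le> 2 * k" if "x \<in> V" "y \<in> V" for x y
    using dist_le_diameter[OF that] D k_def by linarith
  obtain z0 where z0: "z0 \<in> V" "d u z0 = k"
    using ecc_attained[OF u] k_def by metis
  obtain w where w: "w \<in> V" "d u w = 1" and cover: "\<And>z. z \<in> V \<Longrightarrow> d u z = k \<Longrightarrow> d w z < k"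
    using exists_covering_neighbour[OF u z0 k] dist_D by blast
  have "d w v \<le> k - 1" if v: "v \<in> V" for v
  proof -
    have "d u v \<le> k"
      using dist_le_ecc[OF u v] k_def by simp
    then consider "d u v \<le> k - 2" | "d u v = k - 1" | "d u v = k"
      by linarith
    then show ?thesis
    proof cases
      case 1
      then show ?thesis
        using dist_triangle[OF w(1) u v] dist_sym[OF u w(1)] w(2) k by linarith
    next
      case 2
      have "d z0 w < k"
        using cover[OF z0] dist_sym[OF z0(1) w(1)] by simp
      then have "d v w + 2 * 1 \<le> d u v + d u w + 1"
        using four_point_bound[where h = 1, OF u z0(1) _ v w(1)] dist_D[OF z0(1) v] 2 w(2) z0(2) k
        by simp
      then show ?thesis
        using dist_sym[OF v w(1)] 2 w(2) k by linarith
    next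
      case 3
      then show ?thesis
        using cover[OF v] by simp
    qed
  qed
  then have "ecc V E w \<le> k - 1"
    by (rule ecc_le[OF w(1)])
  then show ?thesis
    using that w(1) k k_def by simp
qed

lemma two_radius_le_diameter_add_two: "2 * radius V E \<le> diameter V E + 2"
proof (rule ccontr)
  assume small: "\<not> 2 * radius V E \<le> diameter V E + 2"
  obtain c where c: "c \<in> V" "ecc V E c = radius V E"
    by (rule radius_attained)
  have "diameter V E + 3 \<le> 2 * ecc V E c"
    using c(2) small by linarith
  then obtain w where "w \<in> V" "ecc V E w < radius V E"
    using eccentricity_descent[OF c(1)] c(2) by metis
  then show False
    using radius_le_ecc[of w] by simp
qed

lemma exists_far_diametral:
  assumes u: "u \<in> V"
  shows "\<exists>t\<in>diametral V E. radius V E \<le> d u t"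
proof (rule ccontr)
  assume "\<not> ?thesis"
  then have near: "d u t < radius V E" if "t \<in> diametral V E" for t
    using that by auto
  obtain t1 t2 where t: "t1 \<in> diametral V E" "t2 \<in> diametral V E" "d t1 t2 = diameter V E"
    by (rule diametral_pair)
  then have tV: "t1 \<in> V" "t2 \<in> V"
    by (simp_all add: diametral_def)
  have "d t1 t2 \<le> d u t1 + d u t2"
    using dist_triangle[OF tV(1) u tV(2)] dist_sym[OF tV(1) u] by simp
  then have r: "d u t1 + 1 = radius V E" "d u t2 + 1 = radius V E"
    and D: "diameter V E + 2 = 2 * radius V E"
    using near[OF t(1)] near[OF t(2)] t(3) two_radius_le_diameter_add_two by linarith+
  obtain x where x: "x \<in> V" "d u x = ecc V E u"
    using ecc_attained[OF u] by blast
  have far: "radius V E \<le> d u x"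
    using radius_le_ecc[OF u] x(2) by simp
  then have "x \<notin> diametral V E"
    using near by fastforce
  then have "ecc V E x < diameter V E"
    using ecc_le_diameter[OF x(1)] x(1) by (simp add: diametral_def order_less_le)
  then have "d x t1 < diameter V E" "d x t2 < diameter V E"
    using dist_le_ecc[OF x(1) tV(1)] dist_le_ecc[OF x(1) tV(2)] by linarith+
  moreover have "d u x \<le> diameter V E"
    using dist_le_diameter[OF u x(1)] .
  ultimately have "d t1 t2 + 2 * 1 \<le> d u t1 + d u t2 + 1"
    using four_point_bound[where h = 1, OF u x(1) _ tV] far r D by linarith
  then show False
    using t(3) r D by linarith
qed

end

theorem proposition11:
  fixes V :: "'a set" and E :: "'a \<Rightarrow> 'a \<Rightarrow> bool"
  assumes "simple_graph V E" and "connected_graph V E" and "chordal V E"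
  shows "\<forall>u\<in>V. \<exists>t\<in>diametral V E. dist V E u t \<ge> radius V E"
proof -
  interpret chordal_graph V E
    using assms by unfold_locales
  show ?thesis
    using exists_far_diametral by blast
qed

end
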